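(* Let $h=\sqrt{3}/2$ and consider the similarities of $\mathbb{R}^2$ $$S_1(\vec x)=\tfrac14\vec x,\quad S_2(\vec x)=\tfrac12\vec x+(1,0),\quad S_3(\vec x)=\tfrac14\vec x+(3,0),\quad S_4(\vec x)=\tfrac14\vec x+(1,2h),\quad S_5(\vec x)=\tfrac14\vec x+(\tfrac32,3h).$$ Let $K\subset\mathbb{R}^2$ be the unique nonempty compact set with $K=\bigcup_{j=1}^5 S_j(K)$. Then $K$ is a dendrite (a locally connected continuum containing no simple closed curve). *)

theory Defs
  imports "HOL-Analysis.Analysis"
begin

text \<open>A simple closed curve in S: the image of a closed simple path
  (a loop-free closed path, i.e. a homeomorphic image of the circle) lying in S.\<close>
definition contains_simple_closed_curve :: "(real \<times> real) set \<Rightarrow> bool" where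
  "contains_simple_closed_curve S \<longleftrightarrow>
     (\<exists>g. simple_path g \<and> pathstart g = pathfinish g \<and> path_image g \<subseteq> S)"

definition dendrite :: "(real \<times> real) set \<Rightarrow> bool" where
  "dendrite S \<longleftrightarrow> S \<noteq> {} \<and> compact S \<and> connected S \<and> locally connected S
      \<and> \<not> contains_simple_closed_curve S"

definition hh :: real where "hh = sqrt 3 / 2"

definition S1 :: "real \<times> real \<Rightarrow> real \<times> real" where "S1 x = (1/4) *\<^sub>R x"
definition S2 :: "real \<times> real \<Rightarrow> real \<times> real" where "S2 x = (1/2) *\<^sub>R x + (1, 0)"
definition S3 :: "real \<times> real \<Rightarrow> real \<times> real" where "S3 x = (1/4) *\<^sub>R x + (3, 0)"
definition S4 :: "real \<times> real \<Rightarrow> real \<times> real" where "S4 x = (1/4) *\<^sub>R x + (1, 2 * hh)"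
definition S5 :: "real \<times> real \<Rightarrow> real \<times> real" where "S5 x = (1/4) *\<^sub>R x + (3/2, 3 * hh)"

end

theory Submission
  imports Defs
begin

text \<open>K lies in the equilateral triangle T with vertices (0,0), (4,0), (2, 4h), and the five
  copies S_j(T) meet only in the four points (1,0), (3,0), (2,2h), (3/2,3h), glued in the pattern
  of a tree. The vertices of T are fixed points of S1, S3, S5, hence lie in K, so the Hutchinson
  operator F X = \<Union>_j S_j(X) keeps connected sets containing K connected, and K is the intersection
  of the decreasing continua F^n(T). Local connectedness holds for every connected attractor of a
  contracting iterated function system, because K is a finite union of connected copies of
  arbitrarily small diameter. Finally, no junction point can be crossed by a simple closed curve,
  so every such curve in K lies in a single copy S_j(K); blowing it up by the inverse of S_j
  enlarges it by a factor at least 2, which is absurd for a curve of almost maximal size in the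
  bounded set K.\<close>

section \<open>Simple closed curves and local connectedness\<close>

lemma locally_connected_if_fine_closed_connected_covers:
  fixes S :: "'a::metric_space set"
  assumes fine: "\<And>e. e > 0 \<Longrightarrow> \<exists>P. finite P \<and> \<Union>P = S \<and>
                    (\<forall>Q\<in>P. closed Q \<and> connected Q \<and> (\<forall>a\<in>Q. \<forall>b\<in>Q. dist a b < e))"
  shows "locally connected S"
  unfolding locally_connected_im_kleinen
proof (intro allI impI, elim conjE)
  fix V x assume V: "openin (top_of_set S) V" and "x \<in> V"
  then have "x \<in> S" by (meson openin_imp_subset subsetD)
  obtain e where "e > 0" and e: "\<And>y. y \<in> S \<Longrightarrow> dist y x < e \<Longrightarrow> y \<in> V"
    using V \<open>x \<in> V\<close> unfolding openin_euclidean_subtopology_iff by blast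
  obtain P where "finite P" and cover: "\<Union>P = S"
    and P: "\<And>Q. Q \<in> P \<Longrightarrow> closed Q \<and> connected Q \<and> (\<forall>a\<in>Q. \<forall>b\<in>Q. dist a b < e)"
    using fine[OF \<open>e > 0\<close>] by blast
  define C where "C = \<Union>{Q\<in>P. x \<in> Q}"
  define U where "U = S - \<Union>{Q\<in>P. x \<notin> Q}"
  have "connected C" unfolding C_def by (rule connected_Union) (use P in auto)
  have "C \<subseteq> V"
  proof
    fix y assume "y \<in> C"
    then obtain Q where "Q \<in> P" "x \<in> Q" "y \<in> Q" unfolding C_def by blast
    then show "y \<in> V" using P[OF \<open>Q \<in> P\<close>] cover e by blast
  qed
  have "x \<in> C" unfolding C_def using \<open>x \<in> S\<close> cover by blast
  have "U \<subseteq> C" unfolding U_def C_def using cover by blast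
  have "closed (\<Union>{Q\<in>P. x \<notin> Q})" using \<open>finite P\<close> P by (intro closed_Union) auto
  then have "openin (top_of_set S) U"
    unfolding U_def Diff_eq by (intro openin_open_Int open_Compl)
  moreover have "x \<in> U" unfolding U_def using \<open>x \<in> S\<close> by blast
  ultimately show "\<exists>U. openin (top_of_set S) U \<and> x \<in> U \<and> U \<subseteq> V \<and>
                     (\<forall>y. y \<in> U \<longrightarrow> (\<exists>C. connected C \<and> C \<subseteq> V \<and> x \<in> C \<and> y \<in> C))"
    using \<open>U \<subseteq> C\<close> \<open>C \<subseteq> V\<close> \<open>connected C\<close> \<open>x \<in> C\<close> by blast
qed

lemma simple_loop_in_one_side:
  fixes g :: "real \<Rightarrow> 'a::real_normed_vector"
  assumes g: "simple_path g" "pathfinish g = pathstart g" and sub: "path_image g \<subseteq> L \<union> R"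
    and "closed L" "closed R" and LR: "L \<inter> R \<subseteq> {p}"
  shows "path_image g \<subseteq> L \<or> path_image g \<subseteq> R"
proof (rule ccontr)
  assume "\<not> (path_image g \<subseteq> L \<or> path_image g \<subseteq> R)"
  then obtain a b where a: "a \<in> path_image g" "a \<notin> R" and b: "b \<in> path_image g" "b \<notin> L"
    by blast
  have "a \<in> L" "b \<in> R" "a \<noteq> b" using a b sub by auto
  obtain u d where ud: "arc u" "arc d" "pathstart u = a" "pathfinish u = b"
      "pathstart d = b" "pathfinish d = a"
      "path_image u \<inter> path_image d = {a,b}" "path_image u \<union> path_image d = path_image g"
    using exists_double_arc[OF g a(1) b(1) \<open>a \<noteq> b\<close>] by blast
  \<comment> \<open>Each of the two arcs joins a \<in> L to b \<in> R, so by connectedness it meets L \<inter> R \<subseteq> {p}.\<close>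
  have through_p: "p \<in> path_image h \<inter> L \<inter> R"
    if h: "path h" "path_image h \<subseteq> path_image g" "a \<in> path_image h" "b \<in> path_image h" for h
  proof -
    have "L \<inter> path_image h = {} \<or> R \<inter> path_image h = {}"
      if "L \<inter> R \<inter> path_image h = {}"
      using connected_closedD[OF connected_path_image[OF h(1)] that _ \<open>closed L\<close> \<open>closed R\<close>]
        h(2) sub by blast
    then show ?thesis using h(3,4) \<open>a \<in> L\<close> \<open>b \<in> R\<close> LR by blast
  qed
  have "a \<in> path_image u" "b \<in> path_image u" "a \<in> path_image d" "b \<in> path_image d"
    using ud(3-6) pathstart_in_path_image pathfinish_in_path_image by metis+
  moreover have "path u" "path d" using ud(1,2) by (simp_all add: arc_imp_path)
  ultimately have "p \<in> path_image u \<inter> L \<inter> R" "p \<in> path_image d"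
    using through_p ud(8) by blast+
  then show False using ud(7) a(2) b(2) by auto
qed

lemma simple_loop_rescale:
  fixes g :: "real \<Rightarrow> 'a::real_normed_vector"
  assumes "c \<noteq> 0" "simple_path g" "pathfinish g = pathstart g"
    and "path_image g \<subseteq> (\<lambda>x. c *\<^sub>R x + t) ` K"
  defines "\<phi> \<equiv> \<lambda>y. (1/c) *\<^sub>R (y - t)"
  shows "simple_path (\<phi> \<circ> g)" "pathfinish (\<phi> \<circ> g) = pathstart (\<phi> \<circ> g)"
    and "path_image (\<phi> \<circ> g) \<subseteq> K" "dist (\<phi> a) (\<phi> b) = dist a b / \<bar>c\<bar>"
proof -
  have "inj \<phi>" unfolding \<phi>_def using \<open>c \<noteq> 0\<close> by (auto intro: injI)
  then show "simple_path (\<phi> \<circ> g)"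
    unfolding \<phi>_def
    by (intro simple_path_continuous_image assms continuous_intros) (auto intro: inj_on_subset)
  show "pathfinish (\<phi> \<circ> g) = pathstart (\<phi> \<circ> g)"
    by (simp add: pathstart_compose pathfinish_compose assms(3))
  show "path_image (\<phi> \<circ> g) \<subseteq> K"
    using assms(4) \<open>c \<noteq> 0\<close> by (auto simp: path_image_compose \<phi>_def)
  have "\<phi> a - \<phi> b = (1/c) *\<^sub>R (a - b)" unfolding \<phi>_def by (simp add: algebra_simps)
  then show "dist (\<phi> a) (\<phi> b) = dist a b / \<bar>c\<bar>" by (simp add: dist_norm)
qed

text \<open>If every simple loop in a bounded set K lies in a copy of K shrunk by a factor at most
  r < 1, then pulling back a loop whose two points are almost as far apart as possible yields a
  loop in K with points even further apart.\<close>
lemma no_simple_loop_if_loops_rescale: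
  fixes K :: "'a::real_normed_vector set"
  assumes "bounded K" "r < 1"
    and rescale: "\<And>g. simple_path g \<Longrightarrow> pathfinish g = pathstart g \<Longrightarrow> path_image g \<subseteq> K \<Longrightarrow>
                    \<exists>c t. 0 < c \<and> c \<le> r \<and> path_image g \<subseteq> (\<lambda>x. c *\<^sub>R x + t) ` K"
  shows "\<nexists>g. simple_path g \<and> pathfinish g = pathstart g \<and> path_image g \<subseteq> K"
proof
  define loop where "loop g \<longleftrightarrow> simple_path g \<and> pathfinish g = pathstart g \<and> path_image g \<subseteq> K"
    for g :: "real \<Rightarrow> 'a"
  define D where "D = {dist a b |g a b. loop g \<and> a \<in> path_image g \<and> b \<in> path_image g}"
  assume "\<exists>g. simple_path g \<and> pathfinish g = pathstart g \<and> path_image g \<subseteq> K"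
  then obtain g where g: "loop g" unfolding loop_def by blast
  then obtain x where x: "x \<in> path_image g" "x \<noteq> pathstart g"
    using nonempty_simple_path_endless[of g] unfolding loop_def by blast
  have "dist (pathstart g) x \<in> D"
    unfolding D_def using g x(1) pathstart_in_path_image by blast
  have "0 < dist (pathstart g) x" using x(2) by simp
  have bdd: "bdd_above D"
  proof (rule bdd_aboveI)
    fix d assume "d \<in> D"
    then show "d \<le> diameter K"
      unfolding D_def loop_def using diameter_bounded_bound[OF \<open>bounded K\<close>] by blast
  qed
  define M where "M = Sup D"
  have "0 < M" unfolding M_def
    using cSup_upper[OF \<open>dist (pathstart g) x \<in> D\<close> bdd] \<open>0 < dist (pathstart g) x\<close> by linarith
  then have "r * M < M" using \<open>r < 1\<close> by simp
  then obtain d where "d \<in> D" "r * M < d"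
    using less_cSup_iff[OF _ bdd] \<open>dist (pathstart g) x \<in> D\<close> unfolding M_def by blast
  then obtain h a b where h: "loop h" and ab: "a \<in> path_image h" "b \<in> path_image h" "d = dist a b"
    unfolding D_def by blast
  then obtain c t where c: "0 < c" "c \<le> r" and sub: "path_image h \<subseteq> (\<lambda>x. c *\<^sub>R x + t) ` K"
    using rescale unfolding loop_def by blast
  define \<phi> where "\<phi> = (\<lambda>y. (1/c) *\<^sub>R (y - t))"
  have "c \<noteq> 0" "simple_path h" "pathfinish h = pathstart h"
    using c h unfolding loop_def by auto
  note pull = simple_loop_rescale[OF this sub, folded \<phi>_def]
  have "loop (\<phi> \<circ> h)"
    using pull(1-3) unfolding loop_def by blast
  moreover have "\<phi> a \<in> path_image (\<phi> \<circ> h)" "\<phi> b \<in> path_image (\<phi> \<circ> h)"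
    using ab by (simp_all add: path_image_compose)
  moreover have "dist (\<phi> a) (\<phi> b) = dist a b / c"
    using pull(4) c unfolding \<phi>_def by simp
  ultimately have "dist a b / c \<in> D"
    unfolding D_def by (metis (mono_tags, lifting) mem_Collect_eq)
  then have "dist a b / c \<le> M" unfolding M_def using bdd by (rule cSup_upper)
  then have "dist a b \<le> c * M" using c by (simp add: pos_divide_le_eq mult.commute)
  moreover have "c * M < dist a b"
    using \<open>r * M < d\<close> ab(3) c \<open>0 < M\<close> mult_right_mono[of c r M] by linarith
  ultimately show False by linarith
qed

section \<open>Attractors of contracting iterated function systems\<close>

definition hutchinson :: "('a \<Rightarrow> 'b) set \<Rightarrow> 'a set \<Rightarrow> 'b set" where
  "hutchinson fs X = (\<Union>f\<in>fs. f ` X)"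

lemma hutchinson_mono: "X \<subseteq> Y \<Longrightarrow> hutchinson fs X \<subseteq> hutchinson fs Y"
  unfolding hutchinson_def by blast

primrec ifs_pieces :: "('a \<Rightarrow> 'a) set \<Rightarrow> 'a set \<Rightarrow> nat \<Rightarrow> 'a set set" where
  "ifs_pieces fs K 0 = {K}"
| "ifs_pieces fs K (Suc n) = (\<Union>f\<in>fs. (`) f ` ifs_pieces fs K n)"

lemma infdist_image_le:
  fixes X :: "'a::heine_borel set"
  assumes "closed X" "X \<noteq> {}" "f ` X \<subseteq> X" "\<And>x y. dist (f x) (f y) \<le> r * dist x y"
  shows "infdist (f z) X \<le> r * infdist z X"
proof -
  obtain x where x: "x \<in> X" "infdist z X = dist z x"
    using infdist_attains_inf[OF assms(1,2)] by blast
  have "infdist (f z) X \<le> dist (f z) (f x)"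
    using x assms(3) by (intro infdist_le) auto
  also have "\<dots> \<le> r * dist z x" by (rule assms(4))
  finally show ?thesis using x by simp
qed

locale ifs_attractor =
  fixes fs :: "('a::euclidean_space \<Rightarrow> 'a) set" and r :: real and K :: "'a set"
  assumes finite_maps: "finite fs"
    and ratio_nonneg: "0 \<le> r" and ratio_less_1: "r < 1"
    and contraction: "\<And>f x y. f \<in> fs \<Longrightarrow> dist (f x) (f y) \<le> r * dist x y"
    and compact_K: "compact K" and K_nonempty: "K \<noteq> {}"
    and self_similar: "hutchinson fs K = K"
begin

lemma continuous_on_map: "f \<in> fs \<Longrightarrow> continuous_on X f"
  by (intro lipschitz_on_continuous_on[of r] lipschitz_onI contraction ratio_nonneg)

lemma map_image_subset: "f \<in> fs \<Longrightarrow> f ` K \<subseteq> K"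
  using self_similar unfolding hutchinson_def by blast

lemma closed_K: "closed K"
  using compact_K by (rule compact_imp_closed)

lemma bounded_K: "bounded K"
  using compact_K by (rule compact_imp_bounded)

lemma infdist_map_le: "f \<in> fs \<Longrightarrow> infdist (f z) K \<le> r * infdist z K"
  by (intro infdist_image_le closed_K K_nonempty map_image_subset contraction)

lemma fixed_point_in_K:
  assumes "f \<in> fs" "f p = p" shows "p \<in> K"
proof -
  have "infdist p K \<le> r * infdist p K"
    using infdist_map_le[OF assms(1), of p] assms(2) by simp
  then have "infdist p K = 0"
    using ratio_less_1 infdist_nonneg[of p K] mult_le_cancel_right1[of "infdist p K" r] by auto
  then show ?thesis using in_closed_iff_infdist_zero[OF closed_K K_nonempty] by simp
qed

text \<open>The point of K farthest from T is the image of a point of K at most r times as far.\<close>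
lemma K_subset_invariant:
  assumes "closed T" "T \<noteq> {}" "hutchinson fs T \<subseteq> T"
  shows "K \<subseteq> T"
proof -
  obtain z where "z \<in> K" and z: "\<And>y. y \<in> K \<Longrightarrow> infdist y T \<le> infdist z T"
    using continuous_attains_sup[OF compact_K K_nonempty continuous_on_infdist[OF continuous_on_id]]
    by blast
  then obtain f k where "f \<in> fs" "k \<in> K" "z = f k"
    using self_similar unfolding hutchinson_def by blast
  have "f ` T \<subseteq> T" using assms(3) \<open>f \<in> fs\<close> unfolding hutchinson_def by blast
  then have "infdist z T \<le> r * infdist k T"
    unfolding \<open>z = f k\<close> by (rule infdist_image_le[OF assms(1,2) _ contraction[OF \<open>f \<in> fs\<close>]])
  also have "\<dots> \<le> r * infdist z T" using z[OF \<open>k \<in> K\<close>] ratio_nonneg by (rule mult_left_mono)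
  finally have "infdist z T \<le> 0"
    using ratio_less_1 infdist_nonneg[of z T] mult_le_cancel_right1[of "infdist z T" r] by auto
  then have "infdist y T = 0" if "y \<in> K" for y
    using z[OF that] infdist_nonneg[of y T] by linarith
  then show ?thesis using in_closed_iff_infdist_zero[OF assms(1,2)] by blast
qed

lemma compact_hutchinson: "compact X \<Longrightarrow> compact (hutchinson fs X)"
  unfolding hutchinson_def
  by (intro compact_UN finite_maps compact_continuous_image continuous_on_map)

lemma K_subset_iterate: "K \<subseteq> T \<Longrightarrow> K \<subseteq> (hutchinson fs ^^ n) T"
  by (induction n) (use hutchinson_mono self_similar in fastforce)+

lemma infdist_iterate_le:
  assumes "\<And>z. z \<in> T \<Longrightarrow> infdist z K \<le> D" and "z \<in> (hutchinson fs ^^ n) T"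
  shows "infdist z K \<le> r ^ n * D"
  using assms(2)
proof (induction n arbitrary: z)
  case 0 then show ?case using assms(1) by simp
next
  case (Suc n)
  then obtain f k where "f \<in> fs" "k \<in> (hutchinson fs ^^ n) T" "z = f k"
    unfolding hutchinson_def by auto
  have "infdist z K \<le> r * infdist k K" unfolding \<open>z = f k\<close> by (rule infdist_map_le[OF \<open>f \<in> fs\<close>])
  also have "\<dots> \<le> r * (r ^ n * D)" using Suc.IH[OF \<open>k \<in> _\<close>] ratio_nonneg by (rule mult_left_mono)
  finally show ?case by simp
qed

lemma K_eq_Inter_iterates:
  assumes "bounded T" "K \<subseteq> T"
  shows "K = (\<Inter>n. (hutchinson fs ^^ n) T)"
proof
  show "K \<subseteq> (\<Inter>n. (hutchinson fs ^^ n) T)" using K_subset_iterate[OF assms(2)] by blast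
  show "(\<Inter>n. (hutchinson fs ^^ n) T) \<subseteq> K"
  proof
    fix x assume x: "x \<in> (\<Inter>n. (hutchinson fs ^^ n) T)"
    obtain a where "a \<in> K" using K_nonempty by blast
    obtain D where D: "\<And>z. z \<in> T \<Longrightarrow> dist a z \<le> D"
      using \<open>bounded T\<close> unfolding bounded_any_center[of T a] by blast
    have "infdist z K \<le> D" if "z \<in> T" for z
      using infdist_le[OF \<open>a \<in> K\<close>, of z] D[OF that] by (simp add: dist_commute)
    then have "infdist x K \<le> r ^ n * D" for n
      using x infdist_iterate_le by blast
    moreover have "(\<lambda>n. r ^ n * D) \<longlonglongrightarrow> 0"
      using ratio_nonneg ratio_less_1 by (intro tendsto_mult_left_zero LIMSEQ_power_zero) simp
    ultimately have "infdist x K \<le> 0" by (intro LIMSEQ_le_const) auto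
    then show "x \<in> K"
      using in_closed_iff_infdist_zero[OF closed_K K_nonempty] infdist_nonneg[of x K] by simp
  qed
qed

lemma connected_K_from_invariant:
  assumes "compact T" "connected T" "K \<subseteq> T" "hutchinson fs T \<subseteq> T"
    and preserves: "\<And>X. connected X \<Longrightarrow> K \<subseteq> X \<Longrightarrow> connected (hutchinson fs X)"
  shows "connected K"
proof -
  define T' where "T' n = (hutchinson fs ^^ n) T" for n
  have "compact (T' n)" for n unfolding T'_def
    by (induction n) (simp_all add: assms(1) compact_hutchinson)
  moreover have "connected (T' n)" for n unfolding T'_def
    by (induction n) (simp_all add: assms(2) preserves K_subset_iterate[OF assms(3)])
  moreover have "T' (Suc n) \<subseteq> T' n" for n unfolding T'_def
    by (induction n) (simp_all add: assms(4) hutchinson_mono)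
  then have "T' n \<subseteq> T' m" if "m \<le> n" for m n
    using lift_Suc_antimono_le[of T'] that by blast
  ultimately have "connected (\<Inter>n. T' n)" by (rule connected_nest)
  then show ?thesis
    using K_eq_Inter_iterates[OF compact_imp_bounded[OF assms(1)] assms(3)] unfolding T'_def by simp
qed

lemma Union_pieces: "\<Union>(ifs_pieces fs K n) = K"
proof (induction n)
  case (Suc n)
  have "\<Union>(ifs_pieces fs K (Suc n)) = hutchinson fs (\<Union>(ifs_pieces fs K n))"
    unfolding hutchinson_def by auto
  then show ?case using Suc.IH self_similar by simp
qed simp

lemma finite_pieces: "finite (ifs_pieces fs K n)"
  by (induction n) (auto intro!: finite_UN_I finite_maps)

lemma compact_piece: "Q \<in> ifs_pieces fs K n \<Longrightarrow> compact Q"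
  by (induction n arbitrary: Q)
    (auto simp: compact_K intro!: compact_continuous_image continuous_on_map)

lemma connected_piece: "connected K \<Longrightarrow> Q \<in> ifs_pieces fs K n \<Longrightarrow> connected Q"
  by (induction n arbitrary: Q)
    (auto intro!: connected_continuous_image continuous_on_map)

lemma dist_in_piece_le:
  "Q \<in> ifs_pieces fs K n \<Longrightarrow> a \<in> Q \<Longrightarrow> b \<in> Q \<Longrightarrow> dist a b \<le> r ^ n * diameter K"
proof (induction n arbitrary: Q a b)
  case 0 then show ?case using diameter_bounded_bound[OF bounded_K] by simp
next
  case (Suc n)
  then obtain f Q' a' b' where "f \<in> fs" "Q' \<in> ifs_pieces fs K n" "a' \<in> Q'" "b' \<in> Q'"
    "a = f a'" "b = f b'" by auto
  then have "dist a b \<le> r * dist a' b'" using contraction by blast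
  also have "\<dots> \<le> r * (r ^ n * diameter K)"
    using Suc.IH[OF \<open>Q' \<in> _\<close> \<open>a' \<in> Q'\<close> \<open>b' \<in> Q'\<close>] ratio_nonneg by (rule mult_left_mono)
  finally show ?case by simp
qed

lemma locally_connected_K:
  assumes "connected K" shows "locally connected K"
proof (rule locally_connected_if_fine_closed_connected_covers)
  fix e :: real assume "e > 0"
  have "(\<lambda>n. r ^ n * diameter K) \<longlonglongrightarrow> 0"
    using ratio_nonneg ratio_less_1 by (intro tendsto_mult_left_zero LIMSEQ_power_zero) simp
  then obtain n where "r ^ n * diameter K < e"
    using order_tendstoD(2)[OF _ \<open>e > 0\<close>] eventually_sequentially by (metis order_refl)
  then show "\<exists>P. finite P \<and> \<Union>P = K \<and>
               (\<forall>Q\<in>P. closed Q \<and> connected Q \<and> (\<forall>a\<in>Q. \<forall>b\<in>Q. dist a b < e))"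
    using finite_pieces Union_pieces compact_piece connected_piece[OF assms] dist_in_piece_le
    by (intro exI[of _ "ifs_pieces fs K n"]) (fastforce intro: compact_imp_closed)
qed

end

section \<open>The five similarities\<close>

definition similarities :: "(real \<times> real \<Rightarrow> real \<times> real) set" where
  "similarities = {S1, S2, S3, S4, S5}"

lemma hutchinson_similarities:
  "hutchinson similarities X = S1 ` X \<union> S2 ` X \<union> S3 ` X \<union> S4 ` X \<union> S5 ` X"
  unfolding hutchinson_def similarities_def by blast

lemma similarities_affine:
  "S1 = (\<lambda>x. (1/4) *\<^sub>R x + (0, 0))" "S2 = (\<lambda>x. (1/2) *\<^sub>R x + (1, 0))"
  "S3 = (\<lambda>x. (1/4) *\<^sub>R x + (3, 0))" "S4 = (\<lambda>x. (1/4) *\<^sub>R x + (1, 2 * hh))"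
  "S5 = (\<lambda>x. (1/4) *\<^sub>R x + (3/2, 3 * hh))"
  by (simp_all add: fun_eq_iff S1_def S2_def S3_def S4_def S5_def zero_prod_def)

lemma similarity_affine_form:
  assumes "f \<in> similarities"
  obtains c t where "0 < c" "c \<le> 1/2" "f = (\<lambda>x. c *\<^sub>R x + t)"
proof -
  have "f \<in> {(\<lambda>x. c *\<^sub>R x + t) |c t. 0 < c \<and> c \<le> 1/2}"
    using assms unfolding similarities_def similarities_affine by (elim insertE emptyE) force+
  then show thesis using that by blast
qed

lemma similarity_contraction: "f \<in> similarities \<Longrightarrow> dist (f x) (f y) \<le> 1/2 * dist x y"
proof -
  assume "f \<in> similarities"
  then obtain c t where "0 < c" "c \<le> 1/2" "f = (\<lambda>x. c *\<^sub>R x + t)"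
    by (rule similarity_affine_form)
  then have "dist (f x) (f y) = c * dist x y"
    by (simp add: dist_norm flip: scaleR_diff_right)
  then show ?thesis using mult_right_mono[OF \<open>c \<le> 1/2\<close> zero_le_dist] by simp
qed

text \<open>Heights measured in units of sqrt 3, so that the sides of the triangles below have
  slopes 0 and \<plusminus>1 and membership becomes linear arithmetic.\<close>
definition tri_y :: "real \<times> real \<Rightarrow> real" where
  "tri_y z = snd z / sqrt 3"

lemma tri_y_simps [simp]: "tri_y (x, 0) = 0" "tri_y (x, 2 * hh) = 1" "tri_y (x, 3 * hh) = 3/2"
  by (simp_all add: tri_y_def hh_def)

lemma tri_y_affine: "tri_y (c *\<^sub>R z + t) = c * tri_y z + tri_y t"
  by (simp add: tri_y_def add_divide_distrib)

lemma tri_y_eqI: "fst z = fst q \<Longrightarrow> tri_y z = tri_y q \<Longrightarrow> z = q"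
  by (simp add: tri_y_def prod_eq_iff)

lemma subset_singleton_tri_yI:
  "(\<And>z. z \<in> A \<Longrightarrow> fst z = fst q \<and> tri_y z = tri_y q) \<Longrightarrow> A \<subseteq> {q}"
  using tri_y_eqI by blast

text \<open>The closed equilateral triangle with lower left vertex p and side length a.\<close>
definition up_triangle :: "real \<times> real \<Rightarrow> real \<Rightarrow> (real \<times> real) set" where
  "up_triangle p a = {z. tri_y p \<le> tri_y z \<and> tri_y z - tri_y p \<le> fst z - fst p
                        \<and> tri_y z - tri_y p \<le> fst p + a - fst z}"

lemma affine_image_up_triangle:
  assumes "0 < c"
  shows "(\<lambda>z. c *\<^sub>R z + t) ` up_triangle p a \<subseteq> up_triangle (c *\<^sub>R p + t) (c * a)"
proof
  fix w assume "w \<in> (\<lambda>z. c *\<^sub>R z + t) ` up_triangle p a"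
  then obtain z where z: "z \<in> up_triangle p a" "w = c *\<^sub>R z + t" by blast
  have "0 \<le> c * (tri_y z - tri_y p)" "c * (tri_y z - tri_y p) \<le> c * (fst z - fst p)"
    "c * (tri_y z - tri_y p) \<le> c * (fst p + a - fst z)"
    using z(1) assms unfolding up_triangle_def by (auto intro: mult_left_mono)
  then show "w \<in> up_triangle (c *\<^sub>R p + t) (c * a)"
    unfolding up_triangle_def mem_Collect_eq z(2) tri_y_affine by (simp add: algebra_simps)
qed

lemma similarity_images_up_triangle:
  "S1 ` up_triangle (0, 0) 4 \<subseteq> up_triangle (0, 0) 1"
  "S2 ` up_triangle (0, 0) 4 \<subseteq> up_triangle (1, 0) 2"
  "S3 ` up_triangle (0, 0) 4 \<subseteq> up_triangle (3, 0) 1"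
  "S4 ` up_triangle (0, 0) 4 \<subseteq> up_triangle (1, 2 * hh) 1"
  "S5 ` up_triangle (0, 0) 4 \<subseteq> up_triangle (3/2, 3 * hh) 1"
  unfolding similarities_affine
  by (rule affine_image_up_triangle[THEN order_trans]; simp)+

lemma up_triangle_overlaps:
  "up_triangle (0, 0) 1 \<inter> up_triangle (1, 0) 2 \<subseteq> {(1, 0)}"
  "up_triangle (1, 0) 2 \<inter> up_triangle (3, 0) 1 \<subseteq> {(3, 0)}"
  "up_triangle (1, 0) 2 \<inter> up_triangle (1, 2 * hh) 1 \<subseteq> {(2, 2 * hh)}"
  "up_triangle (1, 2 * hh) 1 \<inter> up_triangle (3/2, 3 * hh) 1 \<subseteq> {(3/2, 3 * hh)}"
  "up_triangle (0, 0) 1 \<inter> up_triangle (3, 0) 1 = {}"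
  "up_triangle (0, 0) 1 \<inter> up_triangle (1, 2 * hh) 1 = {}"
  "up_triangle (0, 0) 1 \<inter> up_triangle (3/2, 3 * hh) 1 = {}"
  "up_triangle (1, 0) 2 \<inter> up_triangle (3/2, 3 * hh) 1 = {}"
  "up_triangle (3, 0) 1 \<inter> up_triangle (1, 2 * hh) 1 = {}"
  "up_triangle (3, 0) 1 \<inter> up_triangle (3/2, 3 * hh) 1 = {}"
proof -
  show "up_triangle (0, 0) 1 \<inter> up_triangle (1, 0) 2 \<subseteq> {(1, 0)}"
    "up_triangle (1, 0) 2 \<inter> up_triangle (3, 0) 1 \<subseteq> {(3, 0)}"
    "up_triangle (1, 0) 2 \<inter> up_triangle (1, 2 * hh) 1 \<subseteq> {(2, 2 * hh)}"
    "up_triangle (1, 2 * hh) 1 \<inter> up_triangle (3/2, 3 * hh) 1 \<subseteq> {(3/2, 3 * hh)}"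
    by (rule subset_singleton_tri_yI; auto simp: up_triangle_def)+
  show "up_triangle (0, 0) 1 \<inter> up_triangle (3, 0) 1 = {}"
    "up_triangle (0, 0) 1 \<inter> up_triangle (1, 2 * hh) 1 = {}"
    "up_triangle (0, 0) 1 \<inter> up_triangle (3/2, 3 * hh) 1 = {}"
    "up_triangle (1, 0) 2 \<inter> up_triangle (3/2, 3 * hh) 1 = {}"
    "up_triangle (3, 0) 1 \<inter> up_triangle (1, 2 * hh) 1 = {}"
    "up_triangle (3, 0) 1 \<inter> up_triangle (3/2, 3 * hh) 1 = {}"
    by (auto simp: up_triangle_def)
qed

lemma up_triangle_halfspaces:
  "up_triangle p a = {z. inner (0, - 1 / sqrt 3) z \<le> - tri_y p}
     \<inter> {z. inner (-1, 1 / sqrt 3) z \<le> tri_y p - fst p}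
     \<inter> {z. inner (1, 1 / sqrt 3) z \<le> tri_y p + fst p + a}"
  unfolding up_triangle_def tri_y_def inner_prod_def by auto

lemma convex_up_triangle: "convex (up_triangle p a)"
  unfolding up_triangle_halfspaces by (intro convex_Int convex_halfspace_le)

lemma compact_up_triangle: "compact (up_triangle p a)"
proof -
  have "up_triangle p a \<subseteq> cbox p (fst p + a, snd p + sqrt 3 * a)"
  proof
    fix z assume z: "z \<in> up_triangle p a"
    then have "0 \<le> tri_y z - tri_y p" "tri_y z - tri_y p \<le> a"
      and x: "fst p \<le> fst z" "fst z \<le> fst p + a"
      unfolding up_triangle_def by auto
    then have "0 \<le> sqrt 3 * (tri_y z - tri_y p)" "sqrt 3 * (tri_y z - tri_y p) \<le> sqrt 3 * a"
      by (simp_all add: mult_left_mono)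
    moreover have "sqrt 3 * (tri_y z - tri_y p) = snd z - snd p" by (simp add: tri_y_def field_simps)
    ultimately have "(fst z, snd z) \<in> cbox (fst p, snd p) (fst p + a, snd p + sqrt 3 * a)"
      using x unfolding cbox_Pair_iff by simp
    then show "z \<in> cbox p (fst p + a, snd p + sqrt 3 * a)" by simp
  qed
  then have "bounded (up_triangle p a)" by (rule bounded_subset[OF bounded_cbox])
  moreover have "closed (up_triangle p a)"
    unfolding up_triangle_halfspaces by (intro closed_Int closed_halfspace_le)
  ultimately show ?thesis by (simp add: compact_eq_bounded_closed)
qed

lemma hutchinson_up_triangle:
  "hutchinson similarities (up_triangle (0, 0) 4) \<subseteq> up_triangle (0, 0) 4"
proof -
  have "up_triangle (0, 0) 1 \<union> up_triangle (1, 0) 2 \<union> up_triangle (3, 0) 1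
          \<union> up_triangle (1, 2 * hh) 1 \<union> up_triangle (3/2, 3 * hh) 1 \<subseteq> up_triangle (0, 0) 4"
    by (auto simp: up_triangle_def)
  then show ?thesis
    unfolding hutchinson_similarities using similarity_images_up_triangle by blast
qed

lemma similarity_fixed_points:
  "S1 (0, 0) = (0, 0)" "S3 (4, 0) = (4, 0)" "S5 (2, 4 * hh) = (2, 4 * hh)"
  by (simp_all add: S1_def S3_def S5_def)

lemma continuous_on_similarity: "f \<in> similarities \<Longrightarrow> continuous_on X f"
  by (rule lipschitz_on_continuous_on[OF lipschitz_onI[OF similarity_contraction]]) auto

lemma connected_hutchinson_similarities:
  assumes "connected X" "(0, 0) \<in> X" "(4, 0) \<in> X" "(2, 4 * hh) \<in> X"
  shows "connected (hutchinson similarities X)"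
proof -
  have "connected (f ` X)" if "f \<in> similarities" for f
    by (rule connected_continuous_image[OF continuous_on_similarity[OF that] assms(1)])
  then have c: "connected (S1 ` X)" "connected (S2 ` X)" "connected (S3 ` X)"
    "connected (S4 ` X)" "connected (S5 ` X)"
    unfolding similarities_def by simp_all
  have "S1 (4, 0) = S2 (0, 0)" "S2 (4, 0) = S3 (0, 0)" "S2 (2, 4 * hh) = S4 (4, 0)"
    "S4 (2, 4 * hh) = S5 (0, 0)"
    by (simp_all add: S1_def S2_def S3_def S4_def S5_def)
  then have "S1 (4, 0) \<in> S1 ` X \<inter> S2 ` X" "S2 (4, 0) \<in> S2 ` X \<inter> S3 ` X"
    "S2 (2, 4 * hh) \<in> S2 ` X \<inter> S4 ` X" "S4 (2, 4 * hh) \<in> S4 ` X \<inter> S5 ` X"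
    using assms(2-4) by (metis IntI imageI)+
  then have "connected (S1 ` X \<union> S2 ` X)" "connected (S1 ` X \<union> S2 ` X \<union> S3 ` X)"
    "connected (S1 ` X \<union> S2 ` X \<union> S3 ` X \<union> S4 ` X)"
    "connected (S1 ` X \<union> S2 ` X \<union> S3 ` X \<union> S4 ` X \<union> S5 ` X)"
    by (intro connected_Un c; blast)+
  then show ?thesis unfolding hutchinson_similarities by simp
qed

lemma similar_copies_overlaps:
  assumes "K \<subseteq> up_triangle (0, 0) 4"
  shows "S1 ` K \<inter> S2 ` K \<subseteq> {(1, 0)}" "S2 ` K \<inter> S3 ` K \<subseteq> {(3, 0)}"
    "S2 ` K \<inter> S4 ` K \<subseteq> {(2, 2 * hh)}" "S4 ` K \<inter> S5 ` K \<subseteq> {(3/2, 3 * hh)}"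
    "S1 ` K \<inter> S3 ` K = {}" "S1 ` K \<inter> S4 ` K = {}" "S1 ` K \<inter> S5 ` K = {}"
    "S2 ` K \<inter> S5 ` K = {}" "S3 ` K \<inter> S4 ` K = {}" "S3 ` K \<inter> S5 ` K = {}"
proof -
  have sub: "S1 ` K \<subseteq> up_triangle (0, 0) 1" "S2 ` K \<subseteq> up_triangle (1, 0) 2"
    "S3 ` K \<subseteq> up_triangle (3, 0) 1" "S4 ` K \<subseteq> up_triangle (1, 2 * hh) 1"
    "S5 ` K \<subseteq> up_triangle (3/2, 3 * hh) 1"
    by (intro order_trans[OF image_mono[OF assms]] similarity_images_up_triangle)+
  show "S1 ` K \<inter> S2 ` K \<subseteq> {(1, 0)}" using sub(1,2) up_triangle_overlaps(1) by blast
  show "S2 ` K \<inter> S3 ` K \<subseteq> {(3, 0)}" using sub(2,3) up_triangle_overlaps(2) by blast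
  show "S2 ` K \<inter> S4 ` K \<subseteq> {(2, 2 * hh)}" using sub(2,4) up_triangle_overlaps(3) by blast
  show "S4 ` K \<inter> S5 ` K \<subseteq> {(3/2, 3 * hh)}" using sub(4,5) up_triangle_overlaps(4) by blast
  show "S1 ` K \<inter> S3 ` K = {}" using sub(1,3) up_triangle_overlaps(5) by blast
  show "S1 ` K \<inter> S4 ` K = {}" using sub(1,4) up_triangle_overlaps(6) by blast
  show "S1 ` K \<inter> S5 ` K = {}" using sub(1,5) up_triangle_overlaps(7) by blast
  show "S2 ` K \<inter> S5 ` K = {}" using sub(2,5) up_triangle_overlaps(8) by blast
  show "S3 ` K \<inter> S4 ` K = {}" using sub(3,4) up_triangle_overlaps(9) by blast
  show "S3 ` K \<inter> S5 ` K = {}" using sub(3,5) up_triangle_overlaps(10) by blast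
qed

lemma simple_loop_in_similar_copy:
  assumes "compact K" "K \<subseteq> up_triangle (0, 0) 4" "hutchinson similarities K = K"
    and g: "simple_path g" "pathfinish g = pathstart g" "path_image g \<subseteq> K"
  shows "\<exists>f\<in>similarities. path_image g \<subseteq> f ` K"
proof -
  define C K1 K2 K3 K4 K5
    where "C = path_image g" "K1 = S1 ` K" "K2 = S2 ` K" "K3 = S3 ` K" "K4 = S4 ` K" "K5 = S5 ` K"
  note meet = similar_copies_overlaps[OF assms(2), folded C_K1_K2_K3_K4_K5_def]
  have "closed (f ` K)" if "f \<in> similarities" for f
    using compact_continuous_image[OF continuous_on_similarity[OF that] assms(1)]
    by (rule compact_imp_closed)
  then have cl: "closed K1" "closed K2" "closed K3" "closed K4" "closed K5"
    unfolding C_K1_K2_K3_K4_K5_def similarities_def by simp_all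
  have cover: "C \<subseteq> K1 \<union> K2 \<union> K3 \<union> K4 \<union> K5"
    using g(3) assms(3) unfolding C_K1_K2_K3_K4_K5_def hutchinson_similarities by simp
  \<comment> \<open>The copies are glued along a tree, so each junction point splits their union in two.\<close>
  have cut: "C \<subseteq> L \<or> C \<subseteq> R" if "C \<subseteq> L \<union> R" "closed L" "closed R" "L \<inter> R \<subseteq> {p}" for L R p
    using simple_loop_in_one_side[OF g(1,2)] that unfolding C_K1_K2_K3_K4_K5_def by blast
  have cuts: "C \<subseteq> K1 \<or> C \<subseteq> K2 \<union> K3 \<union> K4 \<union> K5" "C \<subseteq> K3 \<or> C \<subseteq> K1 \<union> K2 \<union> K4 \<union> K5"
    "C \<subseteq> K5 \<or> C \<subseteq> K1 \<union> K2 \<union> K3 \<union> K4" "C \<subseteq> K4 \<union> K5 \<or> C \<subseteq> K1 \<union> K2 \<union> K3"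
  proof -
    show "C \<subseteq> K1 \<or> C \<subseteq> K2 \<union> K3 \<union> K4 \<union> K5"
      by (rule cut[where p = "(1, 0)"])
        (use cover cl meet(1,5,6,7) in \<open>auto intro: closed_Un\<close>)
    show "C \<subseteq> K3 \<or> C \<subseteq> K1 \<union> K2 \<union> K4 \<union> K5"
      by (rule cut[where p = "(3, 0)"])
        (use cover cl meet(2,5,9,10) in \<open>auto intro: closed_Un\<close>)
    show "C \<subseteq> K5 \<or> C \<subseteq> K1 \<union> K2 \<union> K3 \<union> K4"
      by (rule cut[where p = "(3/2, 3 * hh)"])
        (use cover cl meet(4,7,8,10) in \<open>auto intro: closed_Un\<close>)
    show "C \<subseteq> K4 \<union> K5 \<or> C \<subseteq> K1 \<union> K2 \<union> K3"
      by (rule cut[where p = "(2, 2 * hh)"])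
        (use cover cl meet(3,6,7,8,9,10) in \<open>auto intro: closed_Un\<close>)
  qed
  have "C \<subseteq> K1 \<or> C \<subseteq> K2 \<or> C \<subseteq> K3 \<or> C \<subseteq> K4 \<or> C \<subseteq> K5"
  proof (cases "C \<subseteq> K1 \<or> C \<subseteq> K3 \<or> C \<subseteq> K5")
    case False
    then have "C \<subseteq> K2 \<union> K3 \<union> K4 \<union> K5" "C \<subseteq> K1 \<union> K2 \<union> K4 \<union> K5" "C \<subseteq> K1 \<union> K2 \<union> K3 \<union> K4"
      using cuts(1-3) by auto
    then have "C \<subseteq> K2 \<union> K4" using meet(5,7,10) by blast
    then show ?thesis using cuts(4) meet(6,8,9) by blast
  qed blast
  then show ?thesis unfolding C_K1_K2_K3_K4_K5_def similarities_def by blast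
qed

lemma no_simple_closed_curve_in_attractor:
  assumes "compact K" "K \<subseteq> up_triangle (0, 0) 4" "hutchinson similarities K = K"
  shows "\<not> contains_simple_closed_curve K"
proof -
  have "\<nexists>g. simple_path g \<and> pathfinish g = pathstart g \<and> path_image g \<subseteq> K"
  proof (rule no_simple_loop_if_loops_rescale[OF compact_imp_bounded[OF assms(1)]])
    fix g assume "simple_path g" "pathfinish g = pathstart g" "path_image g \<subseteq> K"
    then obtain f where "f \<in> similarities" "path_image g \<subseteq> f ` K"
      using simple_loop_in_similar_copy[OF assms] by blast
    moreover obtain c t where "0 < c" "c \<le> 1/2" "f = (\<lambda>x. c *\<^sub>R x + t)"
      using similarity_affine_form[OF \<open>f \<in> similarities\<close>] .
    ultimately show "\<exists>c t. 0 < c \<and> c \<le> 1/2 \<and> path_image g \<subseteq> (\<lambda>x. c *\<^sub>R x + t) ` K"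
      by blast
  qed simp
  then show ?thesis unfolding contains_simple_closed_curve_def by metis
qed

theorem mainTheorem2:
  fixes K :: "(real \<times> real) set"
  assumes "compact K" and "K \<noteq> {}"
    and "K = S1 ` K \<union> S2 ` K \<union> S3 ` K \<union> S4 ` K \<union> S5 ` K"
  shows "dendrite K"
proof -
  have self_similar: "hutchinson similarities K = K"
    using assms(3) by (simp add: hutchinson_similarities)
  interpret ifs_attractor similarities "1/2" K
    by unfold_locales
      (use assms(1,2) self_similar similarity_contraction in \<open>auto simp: similarities_def\<close>)
  have "(0, 0) \<in> up_triangle (0, 0) 4" by (simp add: up_triangle_def)
  then have triangle: "K \<subseteq> up_triangle (0, 0) 4"
    by (intro K_subset_invariant compact_imp_closed compact_up_triangle hutchinson_up_triangle) auto
  have corners: "(0, 0) \<in> K" "(4, 0) \<in> K" "(2, 4 * hh) \<in> K"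
    using fixed_point_in_K similarity_fixed_points unfolding similarities_def by blast+
  have "connected K"
    by (rule connected_K_from_invariant[OF compact_up_triangle
          convex_connected[OF convex_up_triangle] triangle hutchinson_up_triangle])
      (use corners connected_hutchinson_similarities in blast)
  then show ?thesis
    unfolding dendrite_def
    using assms(1,2) locally_connected_K
      no_simple_closed_curve_in_attractor[OF assms(1) triangle self_similar]
    by blast
qed

end
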